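(* Let $k\geq 2$ and $n>5k^{2}$ be integers. Then \[ n+2k-2-\frac{2(k^{2}-k)}{n+2k+2}>q\left(S_{n,k}^{+}\right)>q\left(S_{n,k}\right)>n+2k-2-\frac{2(k^{2}-k)}{n+2k-3}. \]
   Context: All graphs are finite and simple. For a graph $G$, the signless Laplacian is $Q(G)=D(G)+A(G)$, where $D(G)$ is the diagonal matrix of vertex degrees and $A(G)$ is the adjacency matrix; $q(G)$ denotes the largest eigenvalue of $Q(G)$. $S_{n,k}=K_{k}\vee\overline{K}_{n-k}$ is the graph of order $n$ obtained by joining every vertex of a complete graph on $k$ vertices to every vertex of an independent set of $n-k$ vertices. $S_{n,k}^{+}$ is the graph obtained from $S_{n,k}$ by adding one edge (necessarily joining two vertices of the independent set of size $n-k$). *)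

theory Defs
  imports "Jordan_Normal_Form.Char_Poly"
begin

text \<open>A simple graph on the vertex set {0..<n} is given by a symmetric irreflexive
  adjacency relation E restricted to vertices below n.\<close>

definition degree :: "nat \<Rightarrow> (nat \<Rightarrow> nat \<Rightarrow> bool) \<Rightarrow> nat \<Rightarrow> nat" where
  "degree n E i = card {j. j < n \<and> E i j}"

definition signless_laplacian :: "nat \<Rightarrow> (nat \<Rightarrow> nat \<Rightarrow> bool) \<Rightarrow> real mat" where
  "signless_laplacian n E =
     mat n n (\<lambda>(i,j). (if i = j then real (degree n E i) else 0) + (if E i j then 1 else 0))"

definition q_index :: "nat \<Rightarrow> (nat \<Rightarrow> nat \<Rightarrow> bool) \<Rightarrow> real" where
  "q_index n E = Max {x. eigenvalue (signless_laplacian n E) x}"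

text \<open>S_{n,k} = K_k join complement of K_{n-k}: vertices 0..<k form the clique,
  vertices k..<n the independent set.\<close>
definition S_graph :: "nat \<Rightarrow> nat \<Rightarrow> nat \<Rightarrow> bool" where
  "S_graph k i j = (i \<noteq> j \<and> (i < k \<or> j < k))"

text \<open>S_{n,k}^+: add the edge between the independent-set vertices k and k+1.\<close>
definition S_plus_graph :: "nat \<Rightarrow> nat \<Rightarrow> nat \<Rightarrow> bool" where
  "S_plus_graph k i j = (S_graph k i j \<or> {i, j} = {k, Suc k})"

end

theory Submission
  imports Defs
begin

text \<open>Both signless Laplacians have a positive eigenvector that is constant on the
  classes of the obvious equitable partition (clique, the two ends of the extra edge, the
  remaining independent vertices). For a nonnegative matrix the eigenvalue of a positive
  eigenvector dominates every eigenvalue, so it is the index. Solving the eigenvector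
  equations shows that q(S_{n,k}) is the largest root of the quadratic
  t^2 - (n+2k-2)t + 2(k^2-k) and that q(S_{n,k}^+) is a root of that quadratic times
  (t-k-2) minus 4k; the bounds then follow from sign changes and the intermediate value
  theorem.\<close>

lemma mult_mat_vec_index_sum:
  fixes A :: "'a :: comm_semiring_0 mat"
  assumes "A \<in> carrier_mat n n" "v \<in> carrier_vec n" "i < n"
  shows "(A *\<^sub>v v) $ i = (\<Sum>j\<in>{0..<n}. A $$ (i,j) * v $ j)"
  using assms by (auto simp: scalar_prod_def intro!: sum.cong)

lemma abs_eigenvalue_le_of_positive_eigenvector:
  fixes A :: "real mat"
  assumes A: "A \<in> carrier_mat n n" and nn: "\<And>i j. i<n \<Longrightarrow> j<n \<Longrightarrow> A$$(i,j) \<ge> 0"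
  and u: "u \<in> carrier_vec n" and upos: "\<And>i. i<n \<Longrightarrow> u$i > 0" and Au: "A *\<^sub>v u = \<rho> \<cdot>\<^sub>v u"
  and ev: "eigenvector A v lam"
  shows "\<bar>lam\<bar> \<le> \<rho>"
proof -
  from ev A have v: "v \<in> carrier_vec n" "v \<noteq> 0\<^sub>v n" "A *\<^sub>v v = lam \<cdot>\<^sub>v v"
    by (auto simp: eigenvector_def)
  obtain j where j: "j<n" "v$j \<noteq> 0"
    using v by (metis eq_vecI index_zero_vec(1) carrier_vecD index_zero_vec(2))
  \<comment> \<open>compare v with the smallest multiple t u dominating it entrywise, at an entry i where
    the domination is tight\<close>
  define t where "t = Max ((\<lambda>j. \<bar>v$j\<bar>/u$j) ` {0..<n})"
  have tj: "\<bar>v$j\<bar>/u$j \<le> t" if "j<n" for j unfolding t_def using that by (intro Max_ge) auto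
  have "t \<in> (\<lambda>j. \<bar>v$j\<bar>/u$j) ` {0..<n}" unfolding t_def using j by (intro Max_in) auto
  then obtain i where i: "i<n" "t = \<bar>v$i\<bar>/u$i" by auto
  have tpos: "t > 0" using tj[OF j(1)] j upos[OF j(1)] by (smt (verit) divide_pos_pos zero_less_abs_iff)
  have vi: "\<bar>v$i\<bar> = t * u$i" using i upos[OF i(1)] by auto
  have vjb: "\<bar>v$j\<bar> \<le> t * u$j" if "j<n" for j
    using tj[OF that] upos[OF that] by (simp add: divide_le_eq mult.commute)
  have "\<bar>lam\<bar> * \<bar>v$i\<bar> = \<bar>(A *\<^sub>v v) $ i\<bar>" using v i by (simp add: abs_mult)
  also have "\<dots> = \<bar>\<Sum>j\<in>{0..<n}. A $$ (i,j) * v $ j\<bar>" using mult_mat_vec_index_sum[OF A v(1) i(1)] by simp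
  also have "\<dots> \<le> (\<Sum>j\<in>{0..<n}. \<bar>A $$ (i,j) * v $ j\<bar>)" by (rule sum_abs)
  also have "\<dots> \<le> (\<Sum>j\<in>{0..<n}. A $$ (i,j) * (t * u $ j))"
    using nn[OF i(1)] vjb by (intro sum_mono) (auto simp: abs_mult intro!: mult_left_mono)
  also have "\<dots> = t * (A *\<^sub>v u) $ i" using mult_mat_vec_index_sum[OF A u i(1)]
    by (simp add: sum_distrib_left algebra_simps)
  also have "\<dots> = t * (\<rho> * u $ i)" using Au i u by simp
  also have "\<dots> = \<rho> * \<bar>v$i\<bar>" using vi by simp
  finally have "\<bar>lam\<bar> * \<bar>v$i\<bar> \<le> \<rho> * \<bar>v$i\<bar>" .
  moreover have "\<bar>v$i\<bar> > 0" using vi tpos upos[OF i(1)] by simp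
  ultimately show ?thesis by simp
qed

lemma Max_eigenvalue_eq_of_positive_eigenvector:
  fixes A :: "real mat"
  assumes A: "A \<in> carrier_mat n n" and nn: "\<And>i j. i<n \<Longrightarrow> j<n \<Longrightarrow> A$$(i,j) \<ge> 0"
  and u: "u \<in> carrier_vec n" and upos: "\<And>i. i<n \<Longrightarrow> u$i > 0" and Au: "A *\<^sub>v u = \<rho> \<cdot>\<^sub>v u"
  and n: "n > 0"
  shows "Max {x. eigenvalue A x} = \<rho>"
proof (rule Max_eqI)
  have "char_poly A \<noteq> 0" using degree_monic_char_poly[OF A] by auto
  hence "finite {x. poly (char_poly A) x = 0}" by (rule poly_roots_finite)
  thus "finite {x. eigenvalue A x}" using eigenvalue_root_char_poly[OF A] by simp
  show "y \<le> \<rho>" if "y \<in> {x. eigenvalue A x}" for y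
    using that abs_eigenvalue_le_of_positive_eigenvector[OF A nn u upos Au]
    by (force simp: eigenvalue_def)
  have "u \<noteq> 0\<^sub>v n" using upos[OF n] n by auto
  then show "\<rho> \<in> {x. eigenvalue A x}" using A u Au by (auto simp: eigenvalue_def eigenvector_def)
qed

lemma signless_laplacian_carrier: "signless_laplacian n E \<in> carrier_mat n n"
  by (simp add: signless_laplacian_def)

lemma signless_laplacian_nonneg: "i<n \<Longrightarrow> j<n \<Longrightarrow> signless_laplacian n E $$ (i,j) \<ge> 0"
  by (simp add: signless_laplacian_def)

lemma signless_laplacian_mult_vec_index:
  assumes "i<n" "v \<in> carrier_vec n"
  shows "(signless_laplacian n E *\<^sub>v v) $ i = (\<Sum>j\<in>{0..<n}. if E i j then v$i + v$j else 0)"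
proof -
  have deg: "real (degree n E i) = (\<Sum>j\<in>{0..<n}. if E i j then 1 else 0)"
  proof -
    have "{j. j < n \<and> E i j} = {j\<in>{0..<n}. E i j}" by auto
    thus ?thesis unfolding degree_def
      by (simp add: sum.inter_filter[symmetric] of_nat_sum[symmetric])
  qed
  have "(signless_laplacian n E *\<^sub>v v) $ i = (\<Sum>j\<in>{0..<n}. signless_laplacian n E $$ (i,j) * v $ j)"
    by (rule mult_mat_vec_index_sum[OF signless_laplacian_carrier assms(2) assms(1)])
  also have "\<dots> = (\<Sum>j\<in>{0..<n}. (if i = j then real (degree n E i) * v$j else 0) + (if E i j then v$j else 0))"
    using assms by (intro sum.cong) (auto simp: signless_laplacian_def algebra_simps)
  also have "\<dots> = real (degree n E i) * v$i + (\<Sum>j\<in>{0..<n}. if E i j then v$j else 0)"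
    using assms by (simp add: sum.distrib)
  also have "\<dots> = (\<Sum>j\<in>{0..<n}. (if E i j then v$j else 0) + v$i * (if E i j then 1 else 0))"
    unfolding deg by (simp add: sum.distrib sum_distrib_left algebra_simps)
  also have "\<dots> = (\<Sum>j\<in>{0..<n}. if E i j then v$i + v$j else 0)"
    by (intro sum.cong) auto
  finally show ?thesis .
qed

lemma sum_if_less_eq:
  fixes k n :: nat and f :: "nat \<Rightarrow> 'a :: comm_monoid_add"
  assumes "k \<le> n"
  shows "(\<Sum>j\<in>{0..<n}. if j < k then f j else 0) = (\<Sum>j\<in>{0..<k}. f j)"
proof -
  have "{j\<in>{0..<n}. j<k} = {0..<k}" using assms by auto
  thus ?thesis by (simp add: sum.inter_filter[symmetric])
qed

lemma sum_if_adjacent_dominating_vertex: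
  fixes f :: "nat \<Rightarrow> 'a :: ab_group_add"
  assumes "i < n" and "\<And>j. j < n \<Longrightarrow> E i j \<longleftrightarrow> j \<noteq> i"
  shows "(\<Sum>j\<in>{0..<n}. if E i j then f j else 0) = (\<Sum>j\<in>{0..<n}. f j) - f i"
proof -
  have "(\<Sum>j\<in>{0..<n}. f j) = (\<Sum>j\<in>{0..<n}. (if E i j then f j else 0) + (if j = i then f j else 0))"
    using assms(2) by (intro sum.cong) auto
  also have "\<dots> = (\<Sum>j\<in>{0..<n}. if E i j then f j else 0) + f i"
    using assms(1) by (subst sum.distrib, subst sum.delta) auto
  finally show ?thesis by simp
qed

lemma S_graph_row_sum:
  fixes k n i :: nat and b :: real
  defines "w \<equiv> \<lambda>j. if j < k then 1 else b"
  assumes kn: "k < n" and i: "i < n"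
  shows "(\<Sum>j\<in>{0..<n}. if S_graph k i j then w i + w j else 0)
    = (if i < k then real n + real k - 2 + (real n - real k) * b else real k * (b + 1))"
proof (cases "i < k")
  case True
  have "(\<Sum>j\<in>{0..<n}. if S_graph k i j then w i + w j else 0) = (\<Sum>j\<in>{0..<n}. 1 + w j) - 2"
    using True i by (subst sum_if_adjacent_dominating_vertex) (auto simp: S_graph_def w_def)
  also have "(\<Sum>j\<in>{0..<n}. 1 + w j) = (\<Sum>j\<in>{0..<k}. 1 + w j) + (\<Sum>j\<in>{k..<n}. 1 + w j)"
    using kn by (subst sum.atLeastLessThan_concat) auto
  also have "\<dots> = 2 * real k + (real n - k) * (1 + b)"
    using kn by (simp add: w_def of_nat_diff)
  finally show ?thesis using True by (simp add: algebra_simps)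
next
  case False
  have "(\<Sum>j\<in>{0..<n}. if S_graph k i j then w i + w j else 0)
      = (\<Sum>j\<in>{0..<n}. if j < k then b + 1 else 0)"
    using False by (intro sum.cong) (auto simp: S_graph_def w_def)
  also have "\<dots> = real k * (b + 1)" using kn by (subst sum_if_less_eq) auto
  finally show ?thesis using False by simp
qed

lemma S_plus_graph_row_sum:
  fixes k n i :: nat and b c :: real
  defines "w \<equiv> \<lambda>j. if j < k then 1 else if j < k + 2 then b else c"
  assumes kn: "k + 2 \<le> n" and i: "i < n"
  shows "(\<Sum>j\<in>{0..<n}. if S_plus_graph k i j then w i + w j else 0)
    = (if i < k then real n + real k - 2 + 2 * b + (real n - real k - 2) * c
       else if i < k + 2 then real k * (b + 1) + 2 * b else real k * (c + 1))"
proof -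
  consider "i < k" | "i = k" | "i = k + 1" | "k + 2 \<le> i" by linarith
  then show ?thesis
  proof cases
    case 1
    have "(\<Sum>j\<in>{0..<n}. if S_plus_graph k i j then w i + w j else 0) = (\<Sum>j\<in>{0..<n}. 1 + w j) - 2"
      using 1 i by (subst sum_if_adjacent_dominating_vertex)
        (auto simp: S_plus_graph_def S_graph_def w_def doubleton_eq_iff)
    also have "(\<Sum>j\<in>{0..<n}. 1 + w j)
        = (\<Sum>j\<in>{0..<k}. 1 + w j) + (\<Sum>j\<in>{k..<k+2}. 1 + w j) + (\<Sum>j\<in>{k+2..<n}. 1 + w j)"
    proof -
      have "(\<Sum>j\<in>{0..<n}. 1 + w j) = (\<Sum>j\<in>{0..<k+2}. 1 + w j) + (\<Sum>j\<in>{k+2..<n}. 1 + w j)"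
        by (rule sum.atLeastLessThan_concat[symmetric]) (use kn in auto)
      moreover have "(\<Sum>j\<in>{0..<k+2}. 1 + w j) = (\<Sum>j\<in>{0..<k}. 1 + w j) + (\<Sum>j\<in>{k..<k+2}. 1 + w j)"
        by (rule sum.atLeastLessThan_concat[symmetric]) auto
      ultimately show ?thesis by linarith
    qed
    also have "\<dots> = 2 * real k + 2 * (1 + b) + (real n - k - 2) * (1 + c)"
      using kn by (simp add: w_def of_nat_diff numeral_2_eq_2)
    finally show ?thesis using 1 by (simp add: algebra_simps)
  next
    case 2
    have "(\<Sum>j\<in>{0..<n}. if S_plus_graph k i j then w i + w j else 0)
        = (\<Sum>j\<in>{0..<n}. (if j < k then b + 1 else 0) + (if j = k + 1 then b + b else 0))"
      using 2 by (intro sum.cong) (auto simp: S_plus_graph_def S_graph_def w_def doubleton_eq_iff)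
    also have "\<dots> = real k * (b + 1) + 2 * b"
      using kn by (simp add: sum.distrib sum_if_less_eq sum.delta)
    finally show ?thesis using 2 by simp
  next
    case 3
    have "(\<Sum>j\<in>{0..<n}. if S_plus_graph k i j then w i + w j else 0)
        = (\<Sum>j\<in>{0..<n}. (if j < k then b + 1 else 0) + (if j = k then b + b else 0))"
      using 3 by (intro sum.cong) (auto simp: S_plus_graph_def S_graph_def w_def doubleton_eq_iff)
    also have "\<dots> = real k * (b + 1) + 2 * b"
      using kn by (simp add: sum.distrib sum_if_less_eq sum.delta)
    finally show ?thesis using 3 by simp
  next
    case 4
    have "(\<Sum>j\<in>{0..<n}. if S_plus_graph k i j then w i + w j else 0)
        = (\<Sum>j\<in>{0..<n}. if j < k then c + 1 else 0)"
      using 4 by (intro sum.cong) (auto simp: S_plus_graph_def S_graph_def w_def doubleton_eq_iff)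
    also have "\<dots> = real k * (c + 1)" using kn by (subst sum_if_less_eq) auto
    finally show ?thesis using 4 by simp
  qed
qed

lemma S_graph_eigenvector:
  fixes k n :: nat and r b :: real
  assumes kn: "k < n" and hb: "real k = (r - k) * b" and hr: "r = real n + k - 2 + (real n - k) * b"
  shows "signless_laplacian n (S_graph k) *\<^sub>v vec n (\<lambda>j. if j<k then 1 else b)
         = r \<cdot>\<^sub>v vec n (\<lambda>j. if j<k then 1 else b)"
    (is "?Q *\<^sub>v ?u = _")
proof (rule eq_vecI)
  show "dim_vec (?Q *\<^sub>v ?u) = dim_vec (r \<cdot>\<^sub>v ?u)" by (simp add: signless_laplacian_def)
  fix i assume "i < dim_vec (r \<cdot>\<^sub>v ?u)"
  hence i: "i < n" by simp
  define w where "w = (\<lambda>j::nat. if j < k then 1 else b)"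
  have "(?Q *\<^sub>v ?u) $ i = (\<Sum>j\<in>{0..<n}. if S_graph k i j then ?u$i + ?u$j else 0)"
    by (rule signless_laplacian_mult_vec_index[OF i]) simp
  also have "\<dots> = (\<Sum>j\<in>{0..<n}. if S_graph k i j then w i + w j else 0)"
    using i by (intro sum.cong) (auto simp: w_def)
  also have "\<dots> = (r \<cdot>\<^sub>v ?u) $ i"
  proof -
    have "real k * (b + 1) = r * b" using hb by (simp add: algebra_simps)
    then show ?thesis using i hr unfolding w_def by (simp add: S_graph_row_sum[OF kn i])
  qed
  finally show "(?Q *\<^sub>v ?u) $ i = (r \<cdot>\<^sub>v ?u) $ i" .
qed

lemma S_plus_graph_eigenvector:
  fixes k n :: nat and x b c :: real
  assumes kn: "k + 2 \<le> n" and hb: "real k = (x - k - 2) * b" and hc: "real k = (x - k) * c"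
    and hx: "x = real n + k - 2 + 2 * b + (real n - k - 2) * c"
  shows "signless_laplacian n (S_plus_graph k) *\<^sub>v vec n (\<lambda>j. if j<k then 1 else if j < k+2 then b else c)
         = x \<cdot>\<^sub>v vec n (\<lambda>j. if j<k then 1 else if j < k+2 then b else c)"
    (is "?Q *\<^sub>v ?u = _")
proof (rule eq_vecI)
  show "dim_vec (?Q *\<^sub>v ?u) = dim_vec (x \<cdot>\<^sub>v ?u)" by (simp add: signless_laplacian_def)
  fix i assume "i < dim_vec (x \<cdot>\<^sub>v ?u)"
  hence i: "i < n" by simp
  define w where "w = (\<lambda>j::nat. if j<k then 1 else if j < k+2 then b else c)"
  have "(?Q *\<^sub>v ?u) $ i = (\<Sum>j\<in>{0..<n}. if S_plus_graph k i j then ?u$i + ?u$j else 0)"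
    by (rule signless_laplacian_mult_vec_index[OF i]) simp
  also have "\<dots> = (\<Sum>j\<in>{0..<n}. if S_plus_graph k i j then w i + w j else 0)"
    using i by (intro sum.cong) (auto simp: w_def)
  also have "\<dots> = (x \<cdot>\<^sub>v ?u) $ i"
  proof -
    have "real k * (b + 1) + 2 * b = x * b" "real k * (c + 1) = x * c"
      using hb hc by (simp_all add: algebra_simps)
    then show ?thesis using i hx unfolding w_def by (simp add: S_plus_graph_row_sum[OF kn i])
  qed
  finally show "(?Q *\<^sub>v ?u) $ i = (x \<cdot>\<^sub>v ?u) $ i" .
qed

definition S_quadratic :: "real \<Rightarrow> real \<Rightarrow> real \<Rightarrow> real" where
  "S_quadratic N K t = t^2 - (N + 2 * K - 2) * t + 2 * (K^2 - K)"

definition S_plus_cubic :: "real \<Rightarrow> real \<Rightarrow> real \<Rightarrow> real" where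
  "S_plus_cubic N K t = S_quadratic N K t * (t - K - 2) - 4 * K"

lemma S_quadratic_root_bounds:
  fixes N K :: real
  assumes K: "K \<ge> 2" and N: "N > 5 * K^2"
  obtains r where "S_quadratic N K r = 0" "K + 2 < r"
    "N + 2 * K - 2 - 2 * (K^2 - K) / (N + 2 * K - 3) < r"
    "r < N + 2 * K - 2 - 2 * (K^2 - K) / (N + 2 * K + 2)"
proof -
  define m where "m = N + 2 * K - 2"
  define c where "c = 2 * (K^2 - K)"
  define d where "d = c / (m - 1)"
  define e where "e = c / (m + 4)"
  have p: "S_quadratic N K t = t^2 - m * t + c" for t
    unfolding S_quadratic_def m_def c_def ..
  have K4: "K^2 \<ge> 4" using K power_mono[of 2 K 2] by simp
  have N20: "N > 20" using N K4 by linarith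
  have c: "0 < c" "c < m - 1"
    unfolding c_def m_def using K N K4 mult_pos_pos[of K "K - 1"]
    by (auto simp: power2_eq_square algebra_simps)
  have d: "0 < d" "d < 1" "c = d * (m - 1)" unfolding d_def using c by auto
  have e: "0 < e" "e < 1" "c = e * (m + 4)" unfolding e_def using c by auto
  have "S_quadratic N K (m - d) = d * (d - 1)"
    unfolding p using d(3) by (simp add: power2_eq_square algebra_simps)
  then have low: "S_quadratic N K (m - d) < 0" using d by (simp add: mult_pos_neg)
  have high: "S_quadratic N K m > 0" unfolding p using c by (simp add: power2_eq_square)
  have "continuous_on {m - d..m} (S_quadratic N K)"
    unfolding S_quadratic_def by (intro continuous_intros)
  then obtain r where r: "m - d \<le> r" "r \<le> m" "S_quadratic N K r = 0"
    using IVT'[of "S_quadratic N K" "m - d" 0 m] low high d by auto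
  have "m - d < r" using r low by (cases "r = m - d") auto
  moreover have "r < m - e"
  proof -
    have "S_quadratic N K (m - e) = e * e + 4 * e"
      unfolding p using e(3) by (simp add: power2_eq_square algebra_simps)
    also have "\<dots> > 0" using e by (simp add: add_pos_pos)
    finally have "(m - e - r) * (r - e) > 0"
      using r(3) unfolding p by (simp add: power2_eq_square algebra_simps)
    moreover have "r - e > 0" using r(1) d e N20 K unfolding m_def by linarith
    ultimately show ?thesis by (simp add: zero_less_mult_iff)
  qed
  moreover have "K + 2 < m - d" using d N20 K unfolding m_def by simp
  moreover have "m - d = N + 2 * K - 2 - 2 * (K^2 - K) / (N + 2 * K - 3)"
    "m - e = N + 2 * K - 2 - 2 * (K^2 - K) / (N + 2 * K + 2)"
    unfolding m_def c_def d_def e_def by (simp_all add: algebra_simps)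
  ultimately show thesis using that r(3) by simp
qed

lemma S_plus_cubic_pos_at_upper_bound:
  fixes N K :: real
  assumes K: "K \<ge> 2" and N: "N > 5 * K^2"
  shows "S_plus_cubic N K (N + 2 * K - 2 - 2 * (K^2 - K) / (N + 2 * K + 2)) > 0"
proof -
  define m where "m = N + 2 * K - 2"
  define e where "e = 2 * (K^2 - K) / (m + 4)"
  define U where "U = m - e"
  have K4: "K^2 \<ge> 4" using K power_mono[of 2 K 2] by simp
  have N20: "N > 20" using N K4 by linarith
  have "m + 4 > 0" unfolding m_def using N20 K by simp
  then have em: "e * (m + 4) = 2 * K * (K - 1)"
    unfolding e_def by (simp add: power2_eq_square algebra_simps divide_simps)
  have e: "0 < e" "e < 1"
    unfolding e_def m_def using K N K4 mult_pos_pos[of K "K - 1"]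
    by (auto simp: power2_eq_square algebra_simps divide_less_eq)
  have UK: "U - K - 2 > N + K - 5" using e unfolding U_def m_def by simp
  have "S_quadratic N K U = e * e + 4 * e"
    using em unfolding S_quadratic_def U_def m_def by (simp add: power2_eq_square algebra_simps)
  then have cubic: "S_plus_cubic N K U = e * e * (U - K - 2) + 4 * (e * (U - K - 2)) - 4 * K"
    unfolding S_plus_cubic_def by (simp add: algebra_simps)
  \<comment> \<open>the term 4 e (U - K - 2) alone already beats 4 K\<close>
  have "2 * (K - 1) * (U - K - 2) > m + 4"
  proof -
    have "2 * (K - 2) * (U - K - 2) \<ge> 0" using K UK N20 by (intro mult_nonneg_nonneg) auto
    moreover have "2 * (U - K - 2) > m + 4" using UK N20 unfolding m_def by simp
    ultimately show ?thesis by (simp add: algebra_simps)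
  qed
  then have "K * (m + 4) < K * (2 * (K - 1) * (U - K - 2))"
    using K by (intro mult_strict_left_mono) auto
  also have "\<dots> = (2 * K * (K - 1)) * (U - K - 2)" by (simp add: algebra_simps)
  also have "\<dots> = (e * (U - K - 2)) * (m + 4)" unfolding em[symmetric] by (simp add: algebra_simps)
  finally have "K < e * (U - K - 2)" using N20 K unfolding m_def by simp
  moreover have "e * e * (U - K - 2) > 0" using e UK N20 K by simp
  ultimately have "S_plus_cubic N K U > 0" unfolding cubic by linarith
  then show ?thesis unfolding U_def e_def m_def by (simp add: algebra_simps)
qed

lemma S_plus_cubic_root_between:
  fixes N K r :: real
  assumes K: "K \<ge> 2" and N: "N > 5 * K^2" and r: "S_quadratic N K r = 0"
    and rU: "r < N + 2 * K - 2 - 2 * (K^2 - K) / (N + 2 * K + 2)"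
  obtains x where "S_plus_cubic N K x = 0" "r < x"
    "x < N + 2 * K - 2 - 2 * (K^2 - K) / (N + 2 * K + 2)"
proof -
  define U where "U = N + 2 * K - 2 - 2 * (K^2 - K) / (N + 2 * K + 2)"
  have low: "S_plus_cubic N K r < 0" using r K unfolding S_plus_cubic_def by simp
  have high: "S_plus_cubic N K U > 0" unfolding U_def by (rule S_plus_cubic_pos_at_upper_bound[OF K N])
  have "continuous_on {r..U} (S_plus_cubic N K)"
    unfolding S_plus_cubic_def S_quadratic_def by (intro continuous_intros)
  then obtain x where x: "r \<le> x" "x \<le> U" "S_plus_cubic N K x = 0"
    using IVT'[of "S_plus_cubic N K" r 0 U] low high rU unfolding U_def by auto
  have "r < x" using x low by (cases "x = r") auto
  moreover have "x < U" using x high by (cases "x = U") auto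
  ultimately show thesis using that x(3) unfolding U_def by blast
qed

lemma q_index_S_graph:
  fixes k n :: nat and r :: real
  assumes k: "0 < k" "k < n" and r: "real k < r" "S_quadratic (real n) (real k) r = 0"
  shows "q_index n (S_graph k) = r"
proof -
  define b where "b = real k / (r - real k)"
  have rk: "r - real k > 0" using r(1) by simp
  have hb: "real k = (r - real k) * b" unfolding b_def using rk by simp
  have "(r - real n - real k + 2) * (r - real k) = real k * (real n - real k)"
    using r(2) by (simp add: S_quadratic_def power2_eq_square algebra_simps)
  then have hr: "r = real n + real k - 2 + (real n - real k) * b"
    unfolding b_def using rk by (simp add: field_simps)
  have "b > 0" unfolding b_def using rk k(1) by simp
  then show ?thesis
    unfolding q_index_def
    by (intro Max_eigenvalue_eq_of_positive_eigenvector[OF signless_laplacian_carrier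
          signless_laplacian_nonneg _ _ S_graph_eigenvector[OF k(2) hb hr]])
       (use k in auto)
qed

lemma q_index_S_plus_graph:
  fixes k n :: nat and x :: real
  assumes k: "0 < k" "k + 2 \<le> n" and x: "real k + 2 < x" "S_plus_cubic (real n) (real k) x = 0"
  shows "q_index n (S_plus_graph k) = x"
proof -
  define b where "b = real k / (x - real k - 2)"
  define c where "c = real k / (x - real k)"
  have xk: "x - real k - 2 > 0" using x(1) by simp
  have hb: "real k = (x - real k - 2) * b" unfolding b_def using xk by simp
  have hc: "real k = (x - real k) * c" unfolding c_def using xk by simp
  have "(x - real n - real k + 2) * (x - real k) * (x - real k - 2)
      = 2 * real k * (x - real k) + (real n - real k - 2) * real k * (x - real k - 2)"
    using x(2) by (simp add: S_plus_cubic_def S_quadratic_def power2_eq_square algebra_simps)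
  then have "x - real n - real k + 2 = (2 * real k * (x - real k)
      + (real n - real k - 2) * real k * (x - real k - 2)) / ((x - real k) * (x - real k - 2))"
    using xk by (simp add: eq_divide_eq mult.assoc)
  also have "\<dots> = 2 * b + (real n - real k - 2) * c"
    unfolding b_def c_def using xk by (simp add: field_simps)
  finally have hx: "x = real n + real k - 2 + 2 * b + (real n - real k - 2) * c"
    by simp
  have "b > 0" "c > 0" unfolding b_def c_def using xk k(1) by simp_all
  then show ?thesis
    unfolding q_index_def
    by (intro Max_eigenvalue_eq_of_positive_eigenvector[OF signless_laplacian_carrier
          signless_laplacian_nonneg _ _ S_plus_graph_eigenvector[OF k(2) hb hc hx]])
       (use k in auto)
qed

theorem proposition1:
  fixes n k :: nat
  assumes "k \<ge> 2" and "n > 5 * k^2"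
  shows "real n + 2 * real k - 2 - 2 * (real k ^ 2 - real k) / (real n + 2 * real k + 2)
           > q_index n (S_plus_graph k)
       \<and> q_index n (S_plus_graph k) > q_index n (S_graph k)
       \<and> q_index n (S_graph k)
           > real n + 2 * real k - 2 - 2 * (real k ^ 2 - real k) / (real n + 2 * real k - 3)"
proof -
  have K: "real k \<ge> 2" using assms(1) by simp
  have N: "real n > 5 * (real k)^2"
    using assms(2) by (metis of_nat_less_iff of_nat_mult of_nat_numeral of_nat_power)
  obtain r where r: "S_quadratic (real n) (real k) r = 0" "real k + 2 < r"
    "real n + 2 * real k - 2 - 2 * (real k ^ 2 - real k) / (real n + 2 * real k - 3) < r"
    "r < real n + 2 * real k - 2 - 2 * (real k ^ 2 - real k) / (real n + 2 * real k + 2)"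
    using S_quadratic_root_bounds[OF K N] by blast
  obtain x where x: "S_plus_cubic (real n) (real k) x = 0" "r < x"
    "x < real n + 2 * real k - 2 - 2 * (real k ^ 2 - real k) / (real n + 2 * real k + 2)"
    using S_plus_cubic_root_between[OF K N r(1) r(4)] by blast
  have "2 * k \<le> k^2" using mult_le_mono1[OF assms(1), of k] by (simp add: power2_eq_square)
  then have "k + 2 \<le> n" using assms by linarith
  then have "q_index n (S_graph k) = r" "q_index n (S_plus_graph k) = x"
    using assms(1) r(1,2) x(1,2) by (simp_all add: q_index_S_graph q_index_S_plus_graph)
  then show ?thesis using r(3) x(2,3) by simp
qed

end
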